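(* Let $P$ be a positive integer, let subcarrier indices be taken modulo $P$, let $\mathbb{P}^{\mathrm{DL}}$ be a set of subcarrier indices, and let $\mathcal{X}:\mathbb{Z}/P\mathbb{Z}\to\mathbb{C}$ be any function. For integers $k\ge 0$ and indices $p$, let $$\mathbb{Q}^{2k+1}_p=\Big\{(q_1,\dots,q_{2k+1})\in(\mathbb{P}^{\mathrm{DL}})^{2k+1} : \textstyle\sum_{i=1}^{k+1}q_i-\sum_{i=k+2}^{2k+1}q_i\equiv p \pmod P\Big\}$$ and $$\Phi_{2k+1}[p]=\frac{1}{P^{2k+1}}\sum_{(q_1,\dots,q_{2k+1})\in\mathbb{Q}^{2k+1}_p}\ \prod_{i=1}^{k+1}\mathcal{X}[q_i]\prod_{i=k+2}^{2k+1}\overline{\mathcal{X}[q_i]}.$$ Then for every integer $k\ge 1$ and every index $p$, $$\Phi_{2k+1}[p]=\frac{1}{P^{2}}\sum_{q_1,q_2\in\mathbb{P}^{\mathrm{DL}}}\mathcal{X}[q_1]\,\mathcal{X}[q_2]\,\overline{\Phi_{2k-1}[q_1+q_2-p]},$$ and also $$\Phi_{2k+1}[p]=\frac{1}{P^{2}}\sum_{q_1,q_{k+2}\in\mathbb{P}^{\mathrm{DL}}}\mathcal{X}[q_1]\,\overline{\mathcal{X}[q_{k+2}]}\,\Phi_{2k-1}[p-q_1+q_{k+2}],$$ where all index arithmetic is modulo $P$.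
   Context: This models an OFDM system with $P$ subcarriers; $\mathbb{P}^{\mathrm{DL}}=\{p^{\mathrm{DL}}_{\mathrm{start}},\dots,p^{\mathrm{DL}}_{\mathrm{end}}\}$ is the set of downlink subcarriers, $\mathcal{X}$ plays the role of the (IQ-imbalanced) frequency-domain downlink signal $\mathcal{X}^{\mathrm{IQ}}_m$ of one OFDM symbol, and $\Phi_{2k+1}$ is the $(2k+1)$th order intermodulation-distortion nonlinear basis in the frequency domain. $\overline{z}$ denotes complex conjugation. *)

theory Defs
  imports Complex_Main "HOL-Library.FuncSet"
begin

text \<open>Subcarrier indices are integers, arithmetic is modulo P. Tuples
(q_1,...,q_{2k+1}) are represented 0-based as extensional functions on {..<2k+1};
positions 0..k are the non-conjugated ones, k+1..2k the conjugated ones.\<close>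

definition Qset :: "int \<Rightarrow> int set \<Rightarrow> nat \<Rightarrow> int \<Rightarrow> (nat \<Rightarrow> int) set" where
  "Qset P PDL k p = {q \<in> {..<2*k+1} \<rightarrow>\<^sub>E PDL.
      ((\<Sum>i<k+1. q i) - (\<Sum>i\<in>{k+1..<2*k+1}. q i)) mod P = p mod P}"

definition Phi :: "int \<Rightarrow> int set \<Rightarrow> (int \<Rightarrow> complex) \<Rightarrow> nat \<Rightarrow> int \<Rightarrow> complex" where
  "Phi P PDL X k p = 1 / (of_int P) ^ (2*k+1) *
     (\<Sum>q\<in>Qset P PDL k p. (\<Prod>i<k+1. X (q i)) * (\<Prod>i\<in>{k+1..<2*k+1}. cnj (X (q i))))"

end

theory Submission
  imports Defs
begin

text \<open>Summing out one coordinate q of a tuple multiplies by X[q] or its conjugate and shifts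
  the target index by -q or +q. Hence the unnormalised sum over tuples with n plain and m
  conjugated coordinates depends only on (n, m) and obeys a simple recursion in both counts,
  and conjugation swaps the two counts while negating the target. Peeling off two plain
  coordinates and conjugating gives the first identity; peeling off one plain and one
  conjugated coordinate gives the second.\<close>

lemma sum_PiE_insert:
  assumes "a \<notin> I"
  shows "(\<Sum>q\<in>insert a I \<rightarrow>\<^sub>E S. f q) = (\<Sum>y\<in>S. \<Sum>g\<in>I \<rightarrow>\<^sub>E S. f (g(a := y)))"
proof -
  have "(\<Sum>q\<in>insert a I \<rightarrow>\<^sub>E S. f q) = (\<Sum>(y, g)\<in>S \<times> (I \<rightarrow>\<^sub>E S). f (g(a := y)))"
    unfolding PiE_insert_eq using inj_combinator[OF assms, of "\<lambda>_. S"]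
    by (simp add: sum.reindex case_prod_beta')
  then show ?thesis
    by (simp add: sum.cartesian_product)
qed

lemma sum_fun_upd_notin: "a \<notin> A \<Longrightarrow> sum (g(a := y)) A = sum g A"
  by (rule sum.cong) auto

lemma prod_fun_upd_notin: "a \<notin> A \<Longrightarrow> (\<Prod>i\<in>A. h ((g(a := y)) i)) = (\<Prod>i\<in>A. h (g i))"
  by (rule prod.cong) auto

context
  fixes P :: int and PDL :: "int set" and X :: "int \<Rightarrow> complex"
begin

definition imd_sum :: "nat set \<Rightarrow> nat set \<Rightarrow> int \<Rightarrow> complex" where
  "imd_sum A B s = (\<Sum>q\<in>A \<union> B \<rightarrow>\<^sub>E PDL.
     if ((\<Sum>i\<in>A. q i) - (\<Sum>i\<in>B. q i)) mod P = s mod P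
     then (\<Prod>i\<in>A. X (q i)) * (\<Prod>i\<in>B. cnj (X (q i))) else 0)"

lemma imd_sum_empty: "imd_sum {} {} s = (if s mod P = 0 then 1 else 0)"
  by (simp add: imd_sum_def)

lemma imd_sum_insert_left:
  assumes "finite A" "finite B" "a \<notin> A" "a \<notin> B"
  shows "imd_sum (insert a A) B s = (\<Sum>y\<in>PDL. X y * imd_sum A B (s - y))"
proof -
  have fresh: "a \<notin> A \<union> B"
    using assms by simp
  note cnj_upd = prod_fun_upd_notin[where h = "\<lambda>z. cnj (X z)"]
  have shift: "(y + t - u) mod P = s mod P \<longleftrightarrow> (t - u) mod P = (s - y) mod P" for y t u :: int
    by (simp add: mod_eq_dvd_iff algebra_simps)
  show ?thesis
    unfolding imd_sum_def Un_insert_left sum_distrib_left sum_PiE_insert[OF fresh]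
    using assms by (intro sum.cong refl)
      (simp_all add: sum_fun_upd_notin prod_fun_upd_notin cnj_upd shift fun_upd_same mult.assoc
        del: fun_upd_apply)
qed

lemma imd_sum_insert_right:
  assumes "finite A" "finite B" "a \<notin> A" "a \<notin> B"
  shows "imd_sum A (insert a B) s = (\<Sum>y\<in>PDL. cnj (X y) * imd_sum A B (s + y))"
proof -
  have fresh: "a \<notin> A \<union> B"
    using assms by simp
  note cnj_upd = prod_fun_upd_notin[where h = "\<lambda>z. cnj (X z)"]
  have shift: "(t - (y + u)) mod P = s mod P \<longleftrightarrow> (t - u) mod P = (s + y) mod P" for y t u :: int
    by (simp add: mod_eq_dvd_iff algebra_simps)
  show ?thesis
    unfolding imd_sum_def Un_insert_right sum_distrib_left sum_PiE_insert[OF fresh]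
    using assms by (intro sum.cong refl)
      (simp_all add: sum_fun_upd_notin prod_fun_upd_notin cnj_upd shift fun_upd_same algebra_simps
        del: fun_upd_apply)
qed

fun imd :: "nat \<Rightarrow> nat \<Rightarrow> int \<Rightarrow> complex" where
  "imd 0 0 s = (if s mod P = 0 then 1 else 0)"
| "imd 0 (Suc m) s = (\<Sum>y\<in>PDL. cnj (X y) * imd 0 m (s + y))"
| "imd (Suc n) m s = (\<Sum>y\<in>PDL. X y * imd n m (s - y))"

lemma imd_sum_eq_imd:
  assumes "finite A" "finite B" "A \<inter> B = {}"
  shows "imd_sum A B s = imd (card A) (card B) s"
  using assms
proof (induction A arbitrary: s rule: finite_induct)
  case empty
  from \<open>finite B\<close> show ?case
    by (induction B arbitrary: s rule: finite_induct) (simp_all add: imd_sum_empty imd_sum_insert_right)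
next
  case (insert a A)
  then show ?case by (simp add: imd_sum_insert_left)
qed

lemma imd_mod_cong: "s mod P = t mod P \<Longrightarrow> imd n m s = imd n m t"
proof (induction n m s arbitrary: t rule: imd.induct)
  case (2 m s)
  have "imd 0 m (s + y) = imd 0 m (t + y)" if "y \<in> PDL" for y
    using 2 that by (metis mod_add_left_eq)
  then show ?case by simp
next
  case (3 n m s)
  have "imd n m (s - y) = imd n m (t - y)" if "y \<in> PDL" for y
    using 3 that by (metis mod_diff_left_eq)
  then show ?case by simp
qed simp

lemma imd_Suc_right: "imd n (Suc m) s = (\<Sum>y\<in>PDL. cnj (X y) * imd n m (s + y))"
proof (induction n arbitrary: s)
  case 0
  then show ?case by simp
next
  case (Suc n)
  have "imd (Suc n) (Suc m) s = (\<Sum>x\<in>PDL. \<Sum>y\<in>PDL. X x * (cnj (X y) * imd n m (s - x + y)))"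
    by (simp add: Suc sum_distrib_left)
  also have "\<dots> = (\<Sum>y\<in>PDL. \<Sum>x\<in>PDL. cnj (X y) * (X x * imd n m (s + y - x)))"
    by (subst sum.swap) (simp add: algebra_simps)
  also have "\<dots> = (\<Sum>y\<in>PDL. cnj (X y) * imd (Suc n) m (s + y))"
    by (simp add: sum_distrib_left)
  finally show ?case .
qed

lemma cnj_imd: "cnj (imd n m s) = imd m n (- s)"
proof (induction n m s rule: imd.induct)
  case (1 s)
  show ?case by (simp add: mod_eq_0_iff_dvd)
next
  case (2 m s)
  have "cnj (imd 0 (Suc m) s) = (\<Sum>y\<in>PDL. X y * imd m 0 (- s - y))"
    by (simp add: 2)
  then show ?case by simp
next
  case (3 n m s)
  have "cnj (imd (Suc n) m s) = (\<Sum>y\<in>PDL. cnj (X y) * imd m n (- s + y))"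
    by (simp add: 3)
  then show ?case by (simp add: imd_Suc_right)
qed

lemma imd_Suc_Suc_left_cnj:
  "imd (Suc (Suc n)) (Suc m) p =
     (\<Sum>q1\<in>PDL. \<Sum>q2\<in>PDL. X q1 * X q2 * cnj (imd (Suc m) n ((q1 + q2 - p) mod P)))"
proof -
  have "cnj (imd (Suc m) n ((q1 + q2 - p) mod P)) = imd n (Suc m) (p - q1 - q2)" for q1 q2
    unfolding cnj_imd by (rule imd_mod_cong) (simp add: mod_minus_eq algebra_simps)
  then show ?thesis
    by (simp add: sum_distrib_left algebra_simps)
qed

lemma imd_Suc_Suc:
  "imd (Suc n) (Suc m) p =
     (\<Sum>q1\<in>PDL. \<Sum>q3\<in>PDL. X q1 * cnj (X q3) * imd n m ((p - q1 + q3) mod P))"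
proof -
  have "imd n m ((p - q1 + q3) mod P) = imd n m (p - q1 + q3)" for q1 q3
    by (rule imd_mod_cong) simp
  then show ?thesis
    by (subst imd.simps(3)) (simp add: imd_Suc_right sum_distrib_left mult.assoc del: imd.simps)
qed

end

lemma Phi_eq_imd:
  assumes "finite PDL"
  shows "Phi P PDL X k p = imd P PDL X (k+1) k p / of_int P ^ (2*k+1)"
proof -
  have parts: "{..<k+1} \<union> {k+1..<2*k+1} = {..<2*k+1}"
    by auto
  have "(\<Sum>q\<in>Qset P PDL k p. (\<Prod>i<k+1. X (q i)) * (\<Prod>i\<in>{k+1..<2*k+1}. cnj (X (q i)))) =
      imd_sum P PDL X {..<k+1} {k+1..<2*k+1} p"
    unfolding imd_sum_def Qset_def parts by (rule sum.inter_filter) (simp add: finite_PiE assms)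
  also have "\<dots> = imd P PDL X (k+1) k p"
    by (subst imd_sum_eq_imd) auto
  finally show ?thesis
    unfolding Phi_def by simp
qed

theorem lemma1:
  fixes P :: int and PDL :: "int set" and X :: "int \<Rightarrow> complex" and k :: nat and p :: int
  assumes "P > 0" and "PDL \<subseteq> {0..<P}" and "k \<ge> 1"
  shows "Phi P PDL X k p = 1 / (of_int P)^2 *
           (\<Sum>q1\<in>PDL. \<Sum>q2\<in>PDL. X q1 * X q2 * cnj (Phi P PDL X (k-1) ((q1 + q2 - p) mod P)))
       \<and> Phi P PDL X k p = 1 / (of_int P)^2 *
           (\<Sum>q1\<in>PDL. \<Sum>q3\<in>PDL. X q1 * cnj (X q3) * Phi P PDL X (k-1) ((p - q1 + q3) mod P))"
proof -
  have fin: "finite PDL"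
    using assms(2) finite_subset by blast
  obtain m where k: "k = Suc m"
    using assms(3) by (cases k) auto
  let ?N = "(of_int P :: complex) ^ (2*m+1)"
  have lhs: "Phi P PDL X k p = 1 / (of_int P)^2 * (imd P PDL X (Suc (Suc m)) (Suc m) p / ?N)"
    unfolding Phi_eq_imd[OF fin] k by (simp add: power_add[symmetric] field_simps)
  have prev: "Phi P PDL X (k-1) r = imd P PDL X (Suc m) m r / ?N" for r
    unfolding Phi_eq_imd[OF fin] k by simp
  show ?thesis
    unfolding lhs prev
    apply (rule conjI)
    subgoal by (subst imd_Suc_Suc_left_cnj) (simp add: sum_divide_distrib del: imd.simps)
    subgoal by (subst imd_Suc_Suc) (simp add: sum_divide_distrib del: imd.simps)
    done
qed

end
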